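(* Let $d,s,k\in\mathbb{N}$ with $k\ge 2$, $d>2k$ and $1\le s\le \frac{d}{2k}$. Then there is at most one pair $(\phi,\mathbf{c})$, where $\phi=\alpha\phi_1+\beta\phi_2$ with real $\alpha,\beta>0$ and $\mathbf{c}\in\mathbb{R}^d$, such that the quadric $\{\mathbf{x}\in\mathbb{R}^d:\ \phi[\mathbf{x}-\mathbf{c}]=1\}$ passes through all vertices of $P^{d}_{s,2k}$.
   Context: $\mathbf{j}=(1,\dots,1)\in\mathbb{R}^d$, $\chi_S$ the indicator vector of $S\subseteq\{1,\dots,d\}$. $\phi_1[\mathbf{x}]=(\sum_i x_i)^2$, $\phi_2[\mathbf{x}]=\bigl|\mathbf{x}-\frac{\sum_i x_i}{d}\mathbf{j}\bigr|^2$. For $t\in\{s,s+1\}$, $\mathbf{V}^{d}_{t,2k}=\{\chi_S-\frac{t-1}{d-2k}\mathbf{j}:\ |S|=t\}$, and $P^{d}_{s,2k}=\operatorname{conv}(\mathbf{V}^{d}_{s,2k}\cup-\mathbf{V}^{d}_{s,2k}\cup\mathbf{V}^{d}_{s+1,2k}\cup-\mathbf{V}^{d}_{s+1,2k})$, whose vertex set is $\pm\mathbf{V}^{d}_{s,2k}\cup\pm\mathbf{V}^{d}_{s+1,2k}$. *)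

theory Defs
  imports "HOL-Analysis.Analysis"
begin

text \<open>Vectors in R^d are modelled as real ^ 'n with d = CARD('n).\<close>

definition jvec :: "real ^ 'n" where
  "jvec = (\<chi> i. 1)"

definition chi_set :: "'n set \<Rightarrow> real ^ 'n" where
  "chi_set S = (\<chi> i. if i \<in> S then 1 else 0)"

definition phi1 :: "real ^ 'n \<Rightarrow> real" where
  "phi1 x = (\<Sum>i\<in>UNIV. x $ i)^2"

definition phi2 :: "real ^ 'n \<Rightarrow> real" where
  "phi2 x = (norm (x - ((\<Sum>i\<in>UNIV. x $ i) / real CARD('n)) *\<^sub>R jvec))^2"

definition Vset :: "nat \<Rightarrow> nat \<Rightarrow> (real ^ 'n) set" where
  "Vset t k = {chi_set S - ((real t - 1) / (real CARD('n) - 2 * real k)) *\<^sub>R jvec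
               | S. card S = t}"

definition Ppoly :: "nat \<Rightarrow> nat \<Rightarrow> (real ^ 'n) set" where
  "Ppoly s k = convex hull (Vset s k \<union> uminus ` Vset s k \<union> Vset (s+1) k \<union> uminus ` Vset (s+1) k)"

definition Pvertices :: "nat \<Rightarrow> nat \<Rightarrow> (real ^ 'n) set" where
  "Pvertices s k = Vset s k \<union> uminus ` Vset s k \<union> Vset (s+1) k \<union> uminus ` Vset (s+1) k"

end

theory Submission imports Defs begin

text \<open>Write Q = a phi1 + b phi2, so that Q x = x \<bullet> M x for a positive definite M.
  The vertex set is centrally symmetric, and comparing Q (v - c) with Q (- v - c) shows
  that M c is orthogonal to every vertex. The vertices in the layers of cardinality s and
  s + 1 span R^d (differences within a layer give all e_i - e_j, and the two layers are
  not both orthogonal to j), so M c = 0 and c = 0. With the centre at the origin, the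
  vertex conditions for the two layers are two linear equations in (a, b) which determine
  them, since phi2 takes different values on the two layers as long as d \<noteq> 2s + 1.\<close>

lemma sum_eq_inner_jvec: "(\<Sum>i\<in>UNIV. x $ i) = x \<bullet> (jvec :: real ^ 'n)"
  by (simp add: inner_vec_def jvec_def)

lemma inner_jvec_jvec: "jvec \<bullet> (jvec :: real ^ 'n) = real CARD('n)"
  by (simp add: inner_vec_def jvec_def)

lemma inner_chi_set: "x \<bullet> chi_set S = (\<Sum>i\<in>S. x $ i)"
  by (simp add: inner_vec_def chi_set_def if_distrib sum.If_cases)

lemma inner_chi_set_jvec: "chi_set S \<bullet> (jvec :: real ^ 'n) = real (card S)"
  using inner_chi_set[of jvec S] by (simp add: inner_commute jvec_def)

lemma inner_chi_set_self: "chi_set S \<bullet> (chi_set S :: real ^ 'n) = real (card S)"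
  using inner_chi_set[of "chi_set S" S] by (simp add: chi_set_def)

lemma phi1_eq: "phi1 (x :: real ^ 'n) = (x \<bullet> jvec)\<^sup>2"
  by (simp add: phi1_def sum_eq_inner_jvec)

lemma phi2_eq: "phi2 (x :: real ^ 'n) = x \<bullet> x - (x \<bullet> jvec)\<^sup>2 / real CARD('n)"
  unfolding phi2_def power2_norm_eq_inner sum_eq_inner_jvec
  by (simp add: inner_diff inner_commute inner_jvec_jvec field_simps power2_eq_square)

lemma phi2_diff_scaleR_jvec: "phi2 (x - r *\<^sub>R jvec) = phi2 (x :: real ^ 'n)"
  unfolding phi2_eq
  by (simp add: inner_diff inner_commute inner_jvec_jvec field_simps power2_eq_square)

lemma phi1_chi_set_shift:
  "phi1 (chi_set S - r *\<^sub>R (jvec :: real ^ 'n)) = (real (card S) - real CARD('n) * r)\<^sup>2"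
  by (simp add: phi1_eq inner_diff_left inner_chi_set_jvec inner_jvec_jvec mult.commute)

lemma phi2_chi_set_shift:
  "phi2 (chi_set S - r *\<^sub>R (jvec :: real ^ 'n)) = real (card S) - (real (card S))\<^sup>2 / real CARD('n)"
  using phi2_diff_scaleR_jvec[of "chi_set S" r]
  by (simp add: phi2_eq inner_chi_set_self inner_chi_set_jvec)

text \<open>The symmetric map M with a * phi1 x + b * phi2 x = x \<bullet> M x.\<close>
definition phi_map :: "real \<Rightarrow> real \<Rightarrow> real ^ 'n \<Rightarrow> real ^ 'n" where
  "phi_map a b c = b *\<^sub>R c + ((a - b / real CARD('n)) * (c \<bullet> jvec)) *\<^sub>R jvec"

lemma phi_form_odd_part:
  fixes v c :: "real ^ 'n"
  shows "a * phi1 (v - c) + b * phi2 (v - c) - (a * phi1 (- v - c) + b * phi2 (- v - c))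
           = - 4 * (v \<bullet> phi_map a b c)"
  unfolding phi1_eq phi2_eq phi_map_def
  by (simp add: inner_diff inner_add_right inner_commute field_simps power2_eq_square)

lemma phi_map_eq_0_iff:
  fixes c :: "real ^ 'n"
  assumes "a > 0" "b > 0"
  shows "phi_map a b c = 0 \<longleftrightarrow> c = 0"
proof
  assume "phi_map a b c = 0"
  have "jvec \<bullet> phi_map a b c = a * real CARD('n) * (c \<bullet> jvec)"
    unfolding phi_map_def by (simp add: inner_add_right inner_commute inner_jvec_jvec field_simps)
  with assms \<open>phi_map a b c = 0\<close> have "c \<bullet> jvec = 0" by simp
  with assms \<open>phi_map a b c = 0\<close> show "c = 0" by (simp add: phi_map_def)
qed (simp add: phi_map_def)

lemma eq_if_sum_const_on_card_subsets:
  fixes f :: "'n :: finite \<Rightarrow> 'a :: cancel_comm_monoid_add"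
  assumes "1 \<le> s" "s < CARD('n)"
    and sum_const: "\<And>S T. card S = s \<Longrightarrow> card T = s \<Longrightarrow> sum f S = sum f T"
  shows "f i = f j"
proof (cases "i = j")
  case False
  have "s - 1 \<le> card (UNIV - {i, j})"
    using False assms(2) by (simp add: card_Diff_subset)
  then obtain T where T: "T \<subseteq> UNIV - {i, j}" "card T = s - 1"
    by (meson obtain_subset_with_card_n)
  then have notin: "i \<notin> T" "j \<notin> T" by auto
  then have "card (insert i T) = s" "card (insert j T) = s"
    using T(2) assms(1) by simp_all
  with sum_const[of "insert i T" "insert j T"] notin show ?thesis
    by simp
qed simp

lemma chi_set_shift_mem_Vset:
  "chi_set S - ((real (card S) - 1) / (real CARD('n) - 2 * real k)) *\<^sub>R jvec
     \<in> (Vset (card S) k :: (real ^ 'n) set)"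
  unfolding Vset_def by blast

lemma Vset_subset_Pvertices: "t = s \<or> t = s + 1 \<Longrightarrow> Vset t k \<subseteq> Pvertices s k"
  unfolding Pvertices_def by blast

lemma uminus_mem_Pvertices: "v \<in> Pvertices s k \<Longrightarrow> - v \<in> Pvertices s k"
  unfolding Pvertices_def by auto

lemma orthogonal_Vset_eq_0:
  fixes w :: "real ^ 'n"
  assumes "1 \<le> s" "s < CARD('n)" "k \<noteq> 0"
    and orth: "\<And>v. v \<in> Vset s k \<union> Vset (s + 1) k \<Longrightarrow> w \<bullet> v = 0"
  shows "w = 0"
proof -
  define d where "d = real CARD('n)"
  define \<theta> where "\<theta> t = (real t - 1) / (d - 2 * real k)" for t :: nat
  have w_chi_set: "w \<bullet> chi_set S = \<theta> t * (w \<bullet> jvec)"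
    if "card S = t" "t = s \<or> t = s + 1" for S t
    using orth[OF rev_subsetD[OF chi_set_shift_mem_Vset, of S k]] that
    by (auto simp: \<theta>_def d_def inner_diff_right)
  have "w $ i = w $ j" for i j
    using assms(1,2) by (rule eq_if_sum_const_on_card_subsets) (simp add: w_chi_set flip: inner_chi_set)
  then have w_const: "w = (w $ i) *\<^sub>R jvec" for i
    by (simp add: vec_eq_iff jvec_def)
  have layer: "w $ i * (real t - d * \<theta> t) = 0" if t: "t = s \<or> t = s + 1" for i t
  proof -
    have "t \<le> card (UNIV :: 'n set)"
      using t assms(2) by auto
    then obtain S :: "'n set" where "card S = t"
      by (meson obtain_subset_with_card_n)
    moreover have "w \<bullet> chi_set S = w $ i * real (card S)"
      using w_const[of i] inner_chi_set_jvec[of S] by (metis inner_commute inner_scaleR_left)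
    moreover have "w \<bullet> jvec = w $ i * d"
      using w_const[of i] inner_jvec_jvec unfolding d_def by (metis inner_scaleR_left)
    ultimately show ?thesis
      using w_chi_set[of S t] t by (simp add: algebra_simps)
  qed
  have "real s - d * \<theta> s \<noteq> 0 \<or> real (s + 1) - d * \<theta> (s + 1) \<noteq> 0"
  \<comment> \<open>If d = 2k then division by zero makes \<theta> vanish, and the first factor is s \<noteq> 0.\<close>
  proof (cases "d = 2 * real k")
    case False
    then show ?thesis
      using assms(3) by (auto simp: \<theta>_def field_simps)
  qed (simp add: \<theta>_def)
  then have "w $ i = 0" for i
    using layer[of s i] layer[of "s + 1" i] by auto
  then show "w = 0"
    by (simp add: vec_eq_iff)
qed

lemma quadric_centre_eq_0:
  fixes c :: "real ^ 'n"
  assumes "1 \<le> s" "s < CARD('n)" "k \<noteq> 0" "a > 0" "b > 0"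
    and quadric: "\<forall>v\<in>Pvertices s k. a * phi1 (v - c) + b * phi2 (v - c) = 1"
  shows "c = 0"
proof -
  have "phi_map a b c \<bullet> v = 0" if "v \<in> Pvertices s k" for v
    using phi_form_odd_part[of a v c b] quadric that uminus_mem_Pvertices[OF that]
    by (simp add: inner_commute)
  then have "phi_map a b c = 0"
    using assms(1-3) Vset_subset_Pvertices[of s s k] Vset_subset_Pvertices[of "s + 1" s k]
    by (intro orthogonal_Vset_eq_0[of s k]) auto
  with assms(4,5) show ?thesis
    by (simp add: phi_map_eq_0_iff)
qed

lemma linear_pair_solution_unique:
  fixes a b a' b' A1 A2 B1 B2 :: real
  assumes "a * A1 + b * B1 = 1" "a * A2 + b * B2 = 1"
    and "a' * A1 + b' * B1 = 1" "a' * A2 + b' * B2 = 1"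
    and "B1 \<noteq> B2"
  shows "a = a' \<and> b = b'"
proof -
  \<comment> \<open>Cramer's rule; the determinant is nonzero because the system is solvable and B1 \<noteq> B2.\<close>
  have det: "x * (A2 * B1 - A1 * B2) = B1 - B2" "y * (B1 - B2) = x * (A2 - A1)"
    if "x * A1 + y * B1 = 1" "x * A2 + y * B2 = 1" for x y
  proof -
    have "x * (A2 * B1 - A1 * B2) = B1 * (x * A2 + y * B2) - B2 * (x * A1 + y * B1)"
      "y * (B1 - B2) = (x * A1 + y * B1) - (x * A2 + y * B2) + x * (A2 - A1)"
      by (simp_all add: algebra_simps)
    with that show "x * (A2 * B1 - A1 * B2) = B1 - B2" "y * (B1 - B2) = x * (A2 - A1)"
      by simp_all
  qed
  have "A2 * B1 - A1 * B2 \<noteq> 0"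
    using det(1)[OF assms(1,2)] assms(5) by auto
  then have "a = a'"
    using det(1)[OF assms(1,2)] det(1)[OF assms(3,4)] by (metis mult_right_cancel)
  moreover from this have "b = b'"
    using det(2)[OF assms(1,2)] det(2)[OF assms(3,4)] assms(5)
    by (metis mult_right_cancel right_minus_eq)
  ultimately show ?thesis ..
qed

lemma quadric_coefficients_unique:
  assumes "s + 1 \<le> CARD('n)" "CARD('n) \<noteq> 2 * s + 1"
    and "\<forall>v\<in>(Pvertices s k :: (real ^ 'n) set). a * phi1 v + b * phi2 v = 1"
    and "\<forall>v\<in>(Pvertices s k :: (real ^ 'n) set). a' * phi1 v + b' * phi2 v = 1"
  shows "a = a' \<and> b = b'"
proof -
  define d where "d = real CARD('n)"
  define A where "A t = (real t - d * ((real t - 1) / (d - 2 * real k)))\<^sup>2" for t :: nat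
  define B where "B t = real t - (real t)\<^sup>2 / d" for t :: nat
  have layer: "x * A t + y * B t = 1"
    if quadric: "\<forall>v\<in>(Pvertices s k :: (real ^ 'n) set). x * phi1 v + y * phi2 v = 1"
      and t: "t = s \<or> t = s + 1" for x y t
  proof -
    have "t \<le> card (UNIV :: 'n set)"
      using t assms(1) by auto
    then obtain S :: "'n set" where S: "card S = t"
      by (meson obtain_subset_with_card_n)
    define v :: "real ^ 'n" where "v = chi_set S - ((real t - 1) / (d - 2 * real k)) *\<^sub>R jvec"
    have "v \<in> Pvertices s k"
      using Vset_subset_Pvertices[OF t, of k] chi_set_shift_mem_Vset[of S k] S
      unfolding v_def d_def by blast
    with quadric have "x * phi1 v + y * phi2 v = 1" by blast
    then show ?thesis
      by (simp add: v_def A_def B_def d_def S phi1_chi_set_shift phi2_chi_set_shift)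
  qed
  have "B s \<noteq> B (s + 1)"
    using assms(2) by (simp add: B_def d_def field_simps power2_eq_square)
  then show ?thesis
    using linear_pair_solution_unique layer[OF assms(3)] layer[OF assms(4)] by blast
qed

theorem theorem7:
  fixes s k :: nat
  assumes "k \<ge> 2" and "CARD('n) > 2 * k" and "1 \<le> s" and "real s \<le> real CARD('n) / (2 * real k)"
  shows "\<forall>(a::real) b (c::real ^ 'n) a' b' c'.
           a > 0 \<and> b > 0 \<and> (\<forall>v\<in>(Pvertices s k :: (real ^ 'n) set). a * phi1 (v - c) + b * phi2 (v - c) = 1) \<and>
           a' > 0 \<and> b' > 0 \<and> (\<forall>v\<in>(Pvertices s k :: (real ^ 'n) set). a' * phi1 (v - c') + b' * phi2 (v - c') = 1)
           \<longrightarrow> (\<lambda>x::real ^ 'n. a * phi1 x + b * phi2 x) = (\<lambda>x::real ^ 'n. a' * phi1 x + b' * phi2 x) \<and> c = c'"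
proof (intro allI impI, elim conjE)
  fix a b a' b' :: real and c c' :: "real ^ 'n"
  assume "a > 0" "b > 0" "a' > 0" "b' > 0"
    and quadric: "\<forall>v\<in>Pvertices s k. a * phi1 (v - c) + b * phi2 (v - c) = 1"
    and quadric': "\<forall>v\<in>Pvertices s k. a' * phi1 (v - c') + b' * phi2 (v - c') = 1"
  have "real (4 * s) \<le> real s * (2 * real k)"
    using \<open>k \<ge> 2\<close> by (simp add: mult_right_mono)
  also have "\<dots> \<le> real CARD('n)"
    using assms(4) \<open>k \<ge> 2\<close> by (simp add: field_simps)
  finally have "s < CARD('n)" "CARD('n) \<noteq> 2 * s + 1"
    using \<open>1 \<le> s\<close> by linarith+
  moreover have "k \<noteq> 0"
    using \<open>k \<ge> 2\<close> by simp
  ultimately have "c = 0" "c' = 0"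
    using quadric_centre_eq_0 \<open>1 \<le> s\<close> \<open>a > 0\<close> \<open>b > 0\<close> \<open>a' > 0\<close> \<open>b' > 0\<close> quadric quadric'
    by blast+
  with quadric quadric' \<open>s < CARD('n)\<close> \<open>CARD('n) \<noteq> 2 * s + 1\<close> have "a = a' \<and> b = b'"
    by (intro quadric_coefficients_unique[where 'n = 'n and s = s and k = k]) simp_all
  with \<open>c = 0\<close> \<open>c' = 0\<close> show "(\<lambda>x. a * phi1 x + b * phi2 x) = (\<lambda>x. a' * phi1 x + b' * phi2 x) \<and> c = c'"
    by simp
qed

end
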